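(* Let $(G,d(\cdot))$ be piecewise $\mathcal C^1$ with continuous reflection and suppose Assumption 2' holds with unit vectors $v_x$ and constants $r_x>0$, $0<c^1_x<1<c^2_x<\infty$, $\alpha_x>0$, $x\in\mathcal V$. Then for each $x\in\mathcal V$ there is a constant $A_x<\infty$ such that for every $r\in(0,r_x/c^2_x)$ there exists a nonnegative function $g_{x,r}\in\mathcal C^2_c(\overline G)$ such that: (1) $\mathrm{supp}[g_{x,r}]\cap\overline G\subset B_{c^2_xr}(x)\cap\overline G\subset B_{r_x}(x)\cap\overline G$; (2) $g_{x,r}(y)=1$ for each $y\in B_{c^1_xr}(x)\cap\overline G$; (3) $\sup_{y\in\overline G}|g_{x,r}(y)|\le A_x$, $\sup_{y\in\overline G}|\nabla g_{x,r}(y)|\le A_x/r$, $\sup_{y\in\overline G}\sum_{i,j=1}^J\big|\frac{\partial^2g_{x,r}(y)}{\partial y_i\partial y_j}\big|<A_x/r^2$; (4) $\langle d,\nabla g_{x,r}(y)\rangle\le0$ for all $d\in d(y)$ and $y\in\partial G$.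
   Context: Notation: $B_r(x)=\{y:|y-x|\le r\}$; $\mathrm{dist}(y,A)=\inf_{z\in A}|y-z|$; $\sigma:\mathbb R^J\to\mathbb R^{J\times N}$ continuous and $a=\sigma\sigma^T$. $\mathcal C^2_c(\overline G)$: restrictions to $\overline G$ of functions $\mathcal C^2$ on every open neighbourhood of $\overline G$ with compact support. Piecewise $\mathcal C^1$ with continuous reflection: $G=\bigcap_{i\in\mathcal I}G_i$ nonempty domain, $\mathcal I$ finite, $G_i=\{\phi^i>0\}$, $\partial G_i=\{\phi^i=0\}$ with $\phi^i\in\mathcal C^1(\mathbb R^J)$; $n^i(x)$ the unit inward normal to $\partial G_i$; $\mathcal I(x)=\{i:x\in\partial G_i\}$; $n(x)=\{\sum_{i\in\mathcal I(x)}s_in^i(x):s_i\ge0\}$; $\gamma^i$ continuous vector fields on $\partial G_i$ with $\langle n^i,\gamma^i\rangle>0$; $d(x)=\{\sum_{i\in\mathcal I(x)}s_i\gamma^i(x):s_i\ge0\}$ for $x\in\partial G$. $\mathcal U=\{x\in\partial G:\exists n\in n(x),\ \langle n,d\rangle>0\ \forall d\in d(x)\setminus\{0\}\}$. Assumption 2': $\mathcal V\subset\partial G$ is finite with $\mathcal V\supset\partial G\setminus\mathcal U$, and for each $x\in\mathcal V$ there exist a unit vector $v_x$ and constants $r_x>0$, $\alpha_x>0$, $0<c^1_x<1<c^2_x<\infty$ such that, with $\Theta_x=\{z:\langle z,v_x\rangle\ge0\}$, for all $y\in\overline G\cap B_{r_x}(x)$: (1) $\langle v_x,y-x\rangle\ge\alpha_x|y-x|$;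 (2) $\gamma^i(y)\in\Theta_x$ for each $i\in\mathcal I(y)\subset\mathcal I(x)$; (3) for every $r\in(0,r_x/c^2_x)$, $\overline G\cap B_{c^1_xr}(x)\subseteq\{y\in\overline G\cap B_{r_x}(x):\mathrm{dist}(y,x+rv_x+\Theta_x)>0\}\subseteq\overline G\cap B_{c^2_xr}(x)$; (4) $v_x^Ta(y)v_x\ge\alpha_x$ for all $y\in B_{r_x}(x)$. *)

theory Defs
  imports "HOL-Analysis.Analysis"
begin

text \<open>Index set I(x) = {i in I : x in boundary G_i}, where boundary G_i = {phi_i = 0}.\<close>
definition active :: "'i set \<Rightarrow> ('i \<Rightarrow> 'a \<Rightarrow> real) \<Rightarrow> 'a \<Rightarrow> 'i set" where
  "active I \<phi> x = {i \<in> I. \<phi> i x = 0}"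

definition gen_cone :: "'i set \<Rightarrow> ('i \<Rightarrow> 'a::real_vector) \<Rightarrow> 'a set" where
  "gen_cone S w = {(\<Sum>i\<in>S. s i *\<^sub>R w i) | s. \<forall>i\<in>S. 0 \<le> s i}"

definition unit_normal :: "'a::real_normed_vector \<Rightarrow> 'a" where
  "unit_normal g = (1 / norm g) *\<^sub>R g"

definition normal_cone :: "'i set \<Rightarrow> ('i \<Rightarrow> 'a \<Rightarrow> real) \<Rightarrow> ('i \<Rightarrow> 'a \<Rightarrow> 'a::real_normed_vector) \<Rightarrow> 'a \<Rightarrow> 'a set" where
  "normal_cone I \<phi> D\<phi> x = gen_cone (active I \<phi> x) (\<lambda>i. unit_normal (D\<phi> i x))"

definition refl_cone :: "'i set \<Rightarrow> ('i \<Rightarrow> 'a \<Rightarrow> real) \<Rightarrow> ('i \<Rightarrow> 'a \<Rightarrow> 'a::real_vector) \<Rightarrow> 'a \<Rightarrow> 'a set" where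
  "refl_cone I \<phi> \<gamma> x = gen_cone (active I \<phi> x) (\<lambda>i. \<gamma> i x)"

definition good_set :: "'a::real_inner set \<Rightarrow> 'i set \<Rightarrow> ('i \<Rightarrow> 'a \<Rightarrow> real) \<Rightarrow> ('i \<Rightarrow> 'a \<Rightarrow> 'a)
    \<Rightarrow> ('i \<Rightarrow> 'a \<Rightarrow> 'a) \<Rightarrow> 'a set" where
  "good_set G I \<phi> D\<phi> \<gamma> = {x \<in> frontier G. \<exists>n\<in>normal_cone I \<phi> D\<phi> x.
      \<forall>d\<in>refl_cone I \<phi> \<gamma> x - {0}. 0 < inner n d}"

definition piecewise_C1_refl :: "'a::euclidean_space set \<Rightarrow> 'i set \<Rightarrow> ('i \<Rightarrow> 'a \<Rightarrow> real)
    \<Rightarrow> ('i \<Rightarrow> 'a \<Rightarrow> 'a) \<Rightarrow> ('i \<Rightarrow> 'a \<Rightarrow> 'a) \<Rightarrow> bool" where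
  "piecewise_C1_refl G I \<phi> D\<phi> \<gamma> \<longleftrightarrow>
     finite I \<and> G = (\<Inter>i\<in>I. {y. 0 < \<phi> i y}) \<and> G \<noteq> {} \<and> open G \<and> connected G \<and>
     (\<forall>i\<in>I. (\<forall>y. (\<phi> i has_derivative (\<lambda>h. inner (D\<phi> i y) h)) (at y))
            \<and> continuous_on UNIV (D\<phi> i)
            \<and> frontier {y. 0 < \<phi> i y} = {y. \<phi> i y = 0}
            \<and> (\<forall>y. \<phi> i y = 0 \<longrightarrow> D\<phi> i y \<noteq> 0)
            \<and> continuous_on {y. \<phi> i y = 0} (\<gamma> i)
            \<and> (\<forall>y. \<phi> i y = 0 \<longrightarrow> 0 < inner (unit_normal (D\<phi> i y)) (\<gamma> i y)))"

text \<open>Assumption 2'. a(y) = \<sigma>(y) \<sigma>(y)^T.\<close>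
definition assumption2' :: "(real^'J) set \<Rightarrow> 'i set \<Rightarrow> ('i \<Rightarrow> real^'J \<Rightarrow> real)
    \<Rightarrow> ('i \<Rightarrow> real^'J \<Rightarrow> real^'J) \<Rightarrow> ('i \<Rightarrow> real^'J \<Rightarrow> real^'J) \<Rightarrow> (real^'J \<Rightarrow> real^'N^'J)
    \<Rightarrow> (real^'J) set \<Rightarrow> (real^'J \<Rightarrow> real^'J) \<Rightarrow> (real^'J \<Rightarrow> real) \<Rightarrow> (real^'J \<Rightarrow> real)
    \<Rightarrow> (real^'J \<Rightarrow> real) \<Rightarrow> (real^'J \<Rightarrow> real) \<Rightarrow> bool" where
  "assumption2' G I \<phi> D\<phi> \<gamma> \<sigma> V v rr \<alpha> c1 c2 \<longleftrightarrow>
     finite V \<and> V \<subseteq> frontier G \<and> frontier G - good_set G I \<phi> D\<phi> \<gamma> \<subseteq> V \<and>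
     (\<forall>x\<in>V. norm (v x) = 1 \<and> 0 < rr x \<and> 0 < \<alpha> x \<and> 0 < c1 x \<and> c1 x < 1 \<and> 1 < c2 x \<and>
        (\<forall>y\<in>closure G \<inter> cball x (rr x). inner (v x) (y - x) \<ge> \<alpha> x * norm (y - x)) \<and>
        (\<forall>y\<in>closure G \<inter> cball x (rr x). active I \<phi> y \<subseteq> active I \<phi> x \<and>
             (\<forall>i\<in>active I \<phi> y. \<gamma> i y \<in> {z. 0 \<le> inner z (v x)})) \<and>
        (\<forall>r. 0 < r \<and> r < rr x / c2 x \<longrightarrow>
             closure G \<inter> cball x (c1 x * r)
               \<subseteq> {y \<in> closure G \<inter> cball x (rr x).
                    0 < infdist y ((\<lambda>z. x + r *\<^sub>R v x + z) ` {z. 0 \<le> inner z (v x)})}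
           \<and> {y \<in> closure G \<inter> cball x (rr x).
                    0 < infdist y ((\<lambda>z. x + r *\<^sub>R v x + z) ` {z. 0 \<le> inner z (v x)})}
               \<subseteq> closure G \<inter> cball x (c2 x * r)) \<and>
        (\<forall>y\<in>cball x (rr x). inner (v x) ((\<sigma> y ** transpose (\<sigma> y)) *v v x) \<ge> \<alpha> x))"

text \<open>g is C^2 on the open set U, with gradient Dg and Hessian Hg (Hg y $ i $ j = d^2 g / dy_j dy_i).\<close>
definition C2_on_with :: "(real^'J \<Rightarrow> real) \<Rightarrow> (real^'J \<Rightarrow> real^'J) \<Rightarrow> (real^'J \<Rightarrow> real^'J^'J)
    \<Rightarrow> (real^'J) set \<Rightarrow> bool" where
  "C2_on_with g Dg Hg U \<longleftrightarrow>
     (\<forall>y\<in>U. (g has_derivative (\<lambda>h. inner (Dg y) h)) (at y)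
           \<and> (Dg has_derivative (\<lambda>h. Hg y *v h)) (at y))
     \<and> continuous_on U Hg"

definition C2c_closure_with :: "(real^'J) set \<Rightarrow> (real^'J \<Rightarrow> real) \<Rightarrow> (real^'J \<Rightarrow> real^'J)
    \<Rightarrow> (real^'J \<Rightarrow> real^'J^'J) \<Rightarrow> bool" where
  "C2c_closure_with G g Dg Hg \<longleftrightarrow>
     (\<exists>U. open U \<and> closure G \<subseteq> U \<and> C2_on_with g Dg Hg U \<and>
          compact (closure {y \<in> U. g y \<noteq> 0}) \<and> closure {y \<in> U. g y \<noteq> 0} \<subseteq> U)"

end

theory Submission
  imports Defs
begin

text \<open>
  Fix a vertex x, write v for v x, and let S be a C^2 step with S = 1 on (-\<infinity>, 0], S = 0 on
  [1, \<infinity>) and S' \<le> 0. The cutoff is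
    g(y) = S((\<langle>v, y - x\<rangle> - c1 r) / w) \<cdot> S((|y - x|^2 - \<rho>^2) / (r_x^2 - \<rho>^2))
  with w = (1 - c1) r / 2 and c2 r < \<rho> < r_x. By condition (3) of Assumption 2', a point of
  closure G in B(x, r_x) with \<langle>v, y - x\<rangle> < r lies in B(x, c2 r), so on closure G the radial
  factor is identically 1 wherever the planar factor is not locally constant. There \<nabla>g is a
  nonpositive multiple of v, hence \<langle>d, \<nabla>g\<rangle> \<le> 0 for every reflection direction d, which lies
  in the half space \<Theta>_x by condition (2); and \<nabla>g, \<nabla>^2g are bounded by sup |S'| / w and
  sup |S''| / w^2.
\<close>

lemma clamp_real: "clamp 0 1 (t::real) = max 0 (min 1 t)"
  unfolding clamp_def Basis_real_def by simp

lemma has_real_derivative_at_left_right: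
  fixes f :: "real \<Rightarrow> real"
  assumes "(f has_real_derivative D) (at_left x)" "(f has_real_derivative D) (at_right x)"
  shows "(f has_real_derivative D) (at x)"
  using assms unfolding has_field_derivative_iff
  by (subst at_eq_sup_left_right) (simp add: filterlim_sup)

lemma eventually_clamp_at_left:
  "\<forall>\<^sub>F s in at_left t. clamp 0 1 s = (if 0 < t \<and> t \<le> 1 then s else clamp 0 1 (t::real))"
proof -
  consider "t \<le> 0" | "0 < t \<and> t \<le> 1" | "1 < t" by linarith
  then show ?thesis
  proof cases
    case 1
    then show ?thesis by (auto simp: clamp_real eventually_at_filter)
  next
    case 2
    then show ?thesis
      by (auto simp: clamp_real intro: eventually_mono[OF eventually_at_left_real[of 0 t]])
  next
    case 3
    then show ?thesis
      by (auto simp: clamp_real intro: eventually_mono[OF eventually_at_left_real[of 1 t]])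
  qed
qed

lemma eventually_clamp_at_right:
  "\<forall>\<^sub>F s in at_right t. clamp 0 1 s = (if 0 \<le> t \<and> t < 1 then s else clamp 0 1 (t::real))"
proof -
  consider "t < 0" | "0 \<le> t \<and> t < 1" | "1 \<le> t" by linarith
  then show ?thesis
  proof cases
    case 1
    then show ?thesis
      by (auto simp: clamp_real intro: eventually_mono[OF eventually_at_right_real[of t 0]])
  next
    case 2
    then show ?thesis
      by (auto simp: clamp_real intro: eventually_mono[OF eventually_at_right_real[of t 1]])
  next
    case 3
    then show ?thesis by (auto simp: clamp_real eventually_at_filter)
  qed
qed

lemma has_real_derivative_clamp_comp:
  assumes P: "\<And>t. (P has_real_derivative P' t) (at t)" and P': "P' 0 = 0" "P' 1 = 0"
  shows "((\<lambda>s. P (clamp 0 1 s)) has_real_derivative P' (clamp 0 1 t)) (at t)"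
proof (rule has_real_derivative_at_left_right)
  have one_sided: "((\<lambda>s. P (clamp 0 1 s)) has_real_derivative P' (clamp 0 1 t)) (at t within S)"
    if ev: "\<forall>\<^sub>F s in at t within S. clamp 0 1 s = (if b then s else clamp 0 1 t)"
      and b: "b \<Longrightarrow> t \<in> {0..1}" "\<not> b \<Longrightarrow> t \<notin> {0<..<1}" for S b
  proof -
    have "((\<lambda>s. P (if b then s else clamp 0 1 t)) has_real_derivative P' (clamp 0 1 t))
        (at t within S)"
      using b P' has_field_derivative_at_within[OF P] by (cases b) (auto simp: clamp_real)
    then show ?thesis
      by (rule has_field_derivative_cong_eventually[THEN iffD1, rotated -1])
         (use ev b in \<open>auto simp: clamp_real elim: eventually_mono\<close>)
  qed
  show "((\<lambda>s. P (clamp 0 1 s)) has_real_derivative P' (clamp 0 1 t)) (at_left t)"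
    by (rule one_sided[OF eventually_clamp_at_left]) auto
  show "((\<lambda>s. P (clamp 0 1 s)) has_real_derivative P' (clamp 0 1 t)) (at_right t)"
    by (rule one_sided[OF eventually_clamp_at_right]) auto
qed

text \<open>The quintic has vanishing first and second derivatives at 0 and 1, so clamping keeps it C^2.\<close>

definition smooth_step :: "real \<Rightarrow> real" where
  "smooth_step t = (let c = clamp 0 1 t in 1 - 10 * c^3 + 15 * c^4 - 6 * c^5)"

definition smooth_step' :: "real \<Rightarrow> real" where
  "smooth_step' t = (let c = clamp 0 1 t in - 30 * c^2 + 60 * c^3 - 30 * c^4)"

definition smooth_step'' :: "real \<Rightarrow> real" where
  "smooth_step'' t = (let c = clamp 0 1 t in - 60 * c + 180 * c^2 - 120 * c^3)"

lemma has_real_derivative_smooth_step: "(smooth_step has_real_derivative smooth_step' t) (at t)"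
  unfolding smooth_step_def[abs_def] smooth_step'_def Let_def
  by (rule has_real_derivative_clamp_comp) (auto intro!: derivative_eq_intros simp: algebra_simps)

lemma has_real_derivative_smooth_step': "(smooth_step' has_real_derivative smooth_step'' t) (at t)"
  unfolding smooth_step'_def[abs_def] smooth_step''_def Let_def
  by (rule has_real_derivative_clamp_comp) (auto intro!: derivative_eq_intros simp: algebra_simps)

lemma continuous_on_smooth_step'': "continuous_on UNIV smooth_step''"
  unfolding smooth_step''_def[abs_def] Let_def clamp_real by (intro continuous_intros)

lemma smooth_step_nonpos:
  "t \<le> 0 \<Longrightarrow> smooth_step t = 1 \<and> smooth_step' t = 0 \<and> smooth_step'' t = 0"
  by (simp add: smooth_step_def smooth_step'_def smooth_step''_def clamp_real)

lemma smooth_step_ge1: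
  "1 \<le> t \<Longrightarrow> smooth_step t = 0 \<and> smooth_step' t = 0 \<and> smooth_step'' t = 0"
  by (simp add: smooth_step_def smooth_step'_def smooth_step''_def clamp_real)

lemma smooth_step_bounds: "0 \<le> smooth_step t" "smooth_step t \<le> 1"
proof -
  define c where "c = clamp 0 1 t"
  have c: "0 \<le> c" "c \<le> 1" by (auto simp: c_def clamp_real)
  have "smooth_step t = (1 - c)^3 * (1 + 3*c + 6*c^2)"
    unfolding smooth_step_def c_def[symmetric] Let_def by algebra
  then show "0 \<le> smooth_step t" using c by simp
  have "smooth_step t = 1 - c^3 * (6 * (c - 5/4)^2 + 5/8)"
    unfolding smooth_step_def c_def[symmetric] Let_def by algebra
  then show "smooth_step t \<le> 1" using c by simp
qed

lemma smooth_step'_bounds: "- 30 \<le> smooth_step' t" "smooth_step' t \<le> 0"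
proof -
  define c where "c = clamp 0 1 t"
  have "0 \<le> c * (1 - c)" "c * (1 - c) \<le> 1" by (auto simp: c_def clamp_real intro: mult_le_one)
  moreover have "smooth_step' t = - 30 * (c * (1 - c))^2"
    unfolding smooth_step'_def c_def[symmetric] Let_def by algebra
  ultimately show "- 30 \<le> smooth_step' t" "smooth_step' t \<le> 0"
    by (simp_all add: power_le_one)
qed

lemma smooth_step''_bound: "\<bar>smooth_step'' t\<bar> \<le> 60"
proof -
  define c where "c = clamp 0 1 t"
  have "\<bar>c\<bar> \<le> 1" "\<bar>1 - c\<bar> \<le> 1" "\<bar>1 - 2 * c\<bar> \<le> 1" by (auto simp: c_def clamp_real)
  then have "\<bar>c\<bar> * \<bar>1 - c\<bar> * \<bar>1 - 2 * c\<bar> \<le> 1" by (intro mult_le_one) auto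
  moreover have "smooth_step'' t = - 60 * (c * (1 - c) * (1 - 2 * c))"
    unfolding smooth_step''_def c_def[symmetric] Let_def by algebra
  ultimately show ?thesis by (simp add: abs_mult)
qed

definition outer :: "real^'n \<Rightarrow> real^'n \<Rightarrow> real^'n^'n" where
  "outer a b = (\<chi> i j. a $ i * b $ j)"

lemma outer_matrix_vector_mult: "outer a b *v h = inner b h *\<^sub>R a"
  by (simp add: outer_def vec_eq_iff matrix_vector_mult_def inner_vec_def sum_distrib_left
      algebra_simps)

lemma outer_zero [simp]: "outer 0 b = 0" "outer a 0 = 0"
  by (simp_all add: outer_def vec_eq_iff)

lemma outer_scaleR: "outer (s *\<^sub>R a) (t *\<^sub>R b) = (s * t) *\<^sub>R outer a b"
  by (simp add: outer_def vec_eq_iff)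

lemma continuous_on_outer [continuous_intros]:
  "continuous_on S f \<Longrightarrow> continuous_on S g \<Longrightarrow> continuous_on S (\<lambda>y. outer (f y) (g y))"
  unfolding outer_def by (intro continuous_intros)

lemma C2_on_with_continuous_on:
  assumes "C2_on_with f Df Hf U"
  shows "continuous_on U f" "continuous_on U Df"
  using assms unfolding C2_on_with_def
  by (auto intro!: continuous_at_imp_continuous_on dest: has_derivative_continuous)

lemma C2_on_with_inner_diff: "C2_on_with (\<lambda>y. inner v (y - x)) (\<lambda>_. v) (\<lambda>_. 0) U"
  unfolding C2_on_with_def
  by (auto intro!: derivative_eq_intros simp: inner_diff_right)

lemma C2_on_with_norm_diff_sq:
  "C2_on_with (\<lambda>y. (norm (y - x))\<^sup>2) (\<lambda>y. 2 *\<^sub>R (y - x)) (\<lambda>_. 2 *\<^sub>R mat 1) U"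
  unfolding C2_on_with_def power2_norm_eq_inner
  by (auto intro!: derivative_eq_intros simp: inner_commute algebra_simps
      scaleR_matrix_vector_assoc[symmetric])

lemma C2_on_with_affine:
  assumes "C2_on_with f Df Hf U"
  shows "C2_on_with (\<lambda>y. (f y - b) / a) (\<lambda>y. Df y /\<^sub>R a) (\<lambda>y. Hf y /\<^sub>R a) U"
  using assms unfolding C2_on_with_def
  by (auto intro!: derivative_eq_intros continuous_intros
      simp: divide_inverse inner_commute scaleR_matrix_vector_assoc[symmetric])

lemma C2_on_with_comp:
  assumes S: "\<And>t. (S has_real_derivative S' t) (at t)"
    and S': "\<And>t. (S' has_real_derivative S'' t) (at t)"
    and S'': "continuous_on UNIV S''"
    and q: "C2_on_with q Dq Hq U"
  shows "C2_on_with (\<lambda>y. S (q y)) (\<lambda>y. S' (q y) *\<^sub>R Dq y)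
           (\<lambda>y. S' (q y) *\<^sub>R Hq y + outer (Dq y) (S'' (q y) *\<^sub>R Dq y)) U"
  unfolding C2_on_with_def
proof (intro conjI ballI)
  fix y assume "y \<in> U"
  then have dq: "(q has_derivative (\<lambda>h. inner (Dq y) h)) (at y)"
    and dDq: "(Dq has_derivative (\<lambda>h. Hq y *v h)) (at y)"
    using q by (auto simp: C2_on_with_def)
  show "((\<lambda>y. S (q y)) has_derivative (\<lambda>h. inner (S' (q y) *\<^sub>R Dq y) h)) (at y)"
    using has_derivative_compose[OF dq S[unfolded has_field_derivative_def]]
    by (simp add: ac_simps)
  have "((\<lambda>y. S' (q y)) has_derivative (\<lambda>h. inner (S'' (q y) *\<^sub>R Dq y) h)) (at y)"
    using has_derivative_compose[OF dq S'[unfolded has_field_derivative_def]]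
    by (simp add: ac_simps)
  from has_derivative_scaleR[OF this dDq]
  show "((\<lambda>y. S' (q y) *\<^sub>R Dq y) has_derivative
          (\<lambda>h. (S' (q y) *\<^sub>R Hq y + outer (Dq y) (S'' (q y) *\<^sub>R Dq y)) *v h)) (at y)"
    by (simp add: matrix_vector_mult_add_rdistrib outer_matrix_vector_mult
        scaleR_matrix_vector_assoc add.commute)
next
  show "continuous_on U (\<lambda>y. S' (q y) *\<^sub>R Hq y + outer (Dq y) (S'' (q y) *\<^sub>R Dq y))"
    using q C2_on_with_continuous_on[OF q] continuous_on_compose2[OF S'' _ subset_UNIV]
      continuous_on_compose2[OF DERIV_continuous_on[OF S'] _ subset_UNIV]
    by (auto simp: C2_on_with_def intro!: continuous_intros)
qed

lemma C2_on_with_mult: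
  assumes f: "C2_on_with f Df Hf U" and g: "C2_on_with g Dg Hg U"
  shows "C2_on_with (\<lambda>y. f y * g y) (\<lambda>y. f y *\<^sub>R Dg y + g y *\<^sub>R Df y)
           (\<lambda>y. f y *\<^sub>R Hg y + outer (Dg y) (Df y) + (g y *\<^sub>R Hf y + outer (Df y) (Dg y))) U"
  unfolding C2_on_with_def
proof (intro conjI ballI)
  fix y assume "y \<in> U"
  then have df: "(f has_derivative (\<lambda>h. inner (Df y) h)) (at y)"
    and dDf: "(Df has_derivative (\<lambda>h. Hf y *v h)) (at y)"
    and dg: "(g has_derivative (\<lambda>h. inner (Dg y) h)) (at y)"
    and dDg: "(Dg has_derivative (\<lambda>h. Hg y *v h)) (at y)"
    using f g by (auto simp: C2_on_with_def)
  show "((\<lambda>y. f y * g y) has_derivative (\<lambda>h. inner (f y *\<^sub>R Dg y + g y *\<^sub>R Df y) h)) (at y)"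
    using has_derivative_mult[OF df dg] by (simp add: algebra_simps inner_add_left)
  show "((\<lambda>y. f y *\<^sub>R Dg y + g y *\<^sub>R Df y) has_derivative
          (\<lambda>h. (f y *\<^sub>R Hg y + outer (Dg y) (Df y) + (g y *\<^sub>R Hf y + outer (Df y) (Dg y))) *v h))
          (at y)"
    using has_derivative_add[OF has_derivative_scaleR[OF df dDg] has_derivative_scaleR[OF dg dDf]]
    by (simp add: matrix_vector_mult_add_rdistrib outer_matrix_vector_mult
        scaleR_matrix_vector_assoc algebra_simps)
next
  show "continuous_on U
      (\<lambda>y. f y *\<^sub>R Hg y + outer (Dg y) (Df y) + (g y *\<^sub>R Hf y + outer (Df y) (Dg y)))"
    using f g C2_on_with_continuous_on[OF f] C2_on_with_continuous_on[OF g]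
    by (auto simp: C2_on_with_def intro!: continuous_intros)
qed

lemma sum_abs_scaled_outer_le:
  fixes v :: "real^'n"
  assumes "norm v = 1"
  shows "(\<Sum>i\<in>UNIV. \<Sum>j\<in>UNIV. \<bar>(c *\<^sub>R outer v v) $ i $ j\<bar>) \<le> \<bar>c\<bar> * (real CARD('n))\<^sup>2"
proof -
  have "\<bar>(c *\<^sub>R outer v v) $ i $ j\<bar> \<le> \<bar>c\<bar>" for i j
  proof -
    have "\<bar>v $ i\<bar> * \<bar>v $ j\<bar> \<le> 1"
      using component_le_norm_cart[of v] assms by (intro mult_le_one) auto
    from mult_left_le[OF this, of "\<bar>c\<bar>"] show ?thesis
      by (simp add: outer_def abs_mult mult.assoc)
  qed
  then have "(\<Sum>i\<in>UNIV. \<Sum>j\<in>UNIV. \<bar>(c *\<^sub>R outer v v) $ i $ j\<bar>)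
      \<le> (\<Sum>i\<in>(UNIV::'n set). \<Sum>j\<in>(UNIV::'n set). \<bar>c\<bar>)"
    by (intro sum_mono)
  then show ?thesis by (simp add: power2_eq_square mult_ac)
qed

lemma halfspace_cutoff:
  fixes x v :: "real^'n"
  assumes v: "norm v = 1" and w: "0 < w"
  obtains g Dg Hg where "C2_on_with g Dg Hg UNIV" "\<And>y. 0 \<le> g y \<and> g y \<le> 1"
    "\<And>y. inner v (y - x) \<le> a \<Longrightarrow> g y = 1"
    "\<And>y. a + w \<le> inner v (y - x) \<Longrightarrow> g y = 0 \<and> Dg y = 0 \<and> Hg y = 0"
    "\<And>y. norm (Dg y) \<le> 30 / w"
    "\<And>y. (\<Sum>i\<in>UNIV. \<Sum>j\<in>UNIV. \<bar>Hg y $ i $ j\<bar>) \<le> 60 * (real CARD('n))\<^sup>2 / w\<^sup>2"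
    "\<And>y d. 0 \<le> inner d v \<Longrightarrow> inner d (Dg y) \<le> 0"
proof -
  define p where "p y = (inner v (y - x) - a) / w" for y
  have "C2_on_with p (\<lambda>_. v /\<^sub>R w) (\<lambda>_. 0) UNIV"
    using C2_on_with_affine[OF C2_on_with_inner_diff] unfolding p_def[abs_def] by simp
  from C2_on_with_comp[OF has_real_derivative_smooth_step has_real_derivative_smooth_step'
      continuous_on_smooth_step'' this]
  have "C2_on_with (\<lambda>y. smooth_step (p y)) (\<lambda>y. (smooth_step' (p y) / w) *\<^sub>R v)
          (\<lambda>y. (smooth_step'' (p y) / w\<^sup>2) *\<^sub>R outer v v) UNIV"
    by (simp add: outer_scaleR power2_eq_square divide_inverse mult_ac)
  then show ?thesis
  proof (rule that)
    show "0 \<le> smooth_step (p y) \<and> smooth_step (p y) \<le> 1" for y using smooth_step_bounds by simp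
    show "smooth_step (p y) = 1" if "inner v (y - x) \<le> a" for y
      using that w smooth_step_nonpos by (simp add: p_def divide_le_0_iff)
    show "smooth_step (p y) = 0 \<and> (smooth_step' (p y) / w) *\<^sub>R v = 0
      \<and> (smooth_step'' (p y) / w\<^sup>2) *\<^sub>R outer v v = 0" if "a + w \<le> inner v (y - x)" for y
      using that w smooth_step_ge1 by (simp add: p_def le_divide_eq)
    show "norm ((smooth_step' (p y) / w) *\<^sub>R v) \<le> 30 / w" for y
    proof -
      have "norm ((smooth_step' (p y) / w) *\<^sub>R v) = \<bar>smooth_step' (p y)\<bar> / w" using v w by simp
      also have "\<dots> \<le> 30 / w"
        using w smooth_step'_bounds[of "p y"] by (simp add: divide_right_mono abs_if)
      finally show ?thesis .
    qed
    show "(\<Sum>i\<in>UNIV. \<Sum>j\<in>UNIV. \<bar>((smooth_step'' (p y) / w\<^sup>2) *\<^sub>R outer v v) $ i $ j\<bar>)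
        \<le> 60 * (real CARD('n))\<^sup>2 / w\<^sup>2" for y
    proof -
      have "(\<Sum>i\<in>UNIV. \<Sum>j\<in>UNIV. \<bar>((smooth_step'' (p y) / w\<^sup>2) *\<^sub>R outer v v) $ i $ j\<bar>)
          \<le> \<bar>smooth_step'' (p y) / w\<^sup>2\<bar> * (real CARD('n))\<^sup>2"
        by (rule sum_abs_scaled_outer_le[OF v])
      also have "\<dots> \<le> 60 / w\<^sup>2 * (real CARD('n))\<^sup>2"
        using smooth_step''_bound w
        by (intro mult_right_mono) (auto simp: abs_div divide_right_mono)
      finally show ?thesis by simp
    qed
    show "inner d ((smooth_step' (p y) / w) *\<^sub>R v) \<le> 0" if "0 \<le> inner d v" for y d
      using that w smooth_step'_bounds(2)[of "p y"]
      by (simp add: mult_nonpos_nonneg divide_nonpos_pos)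
  qed
qed

lemma ball_cutoff:
  fixes x :: "real^'n"
  assumes \<rho>: "0 \<le> \<rho>" "\<rho> < R"
  obtains g Dg Hg where "C2_on_with g Dg Hg UNIV" "\<And>y. 0 \<le> g y \<and> g y \<le> 1"
    "\<And>y. norm (y - x) \<le> \<rho> \<Longrightarrow> g y = 1 \<and> Dg y = 0 \<and> Hg y = 0"
    "\<And>y. R \<le> norm (y - x) \<Longrightarrow> g y = 0 \<and> Dg y = 0 \<and> Hg y = 0"
proof -
  define q where "q y = ((norm (y - x))\<^sup>2 - \<rho>\<^sup>2) / (R\<^sup>2 - \<rho>\<^sup>2)" for y
  define Dq where "Dq y = 2 *\<^sub>R (y - x) /\<^sub>R (R\<^sup>2 - \<rho>\<^sup>2)" for y
  define Hq :: "real^'n^'n" where "Hq = 2 *\<^sub>R mat 1 /\<^sub>R (R\<^sup>2 - \<rho>\<^sup>2)"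
  have R: "0 < R\<^sup>2 - \<rho>\<^sup>2" using \<rho> by (simp add: power_strict_mono)
  have "C2_on_with q Dq (\<lambda>_. Hq) UNIV"
    unfolding q_def[abs_def] Dq_def[abs_def] Hq_def
    by (intro C2_on_with_affine C2_on_with_norm_diff_sq)
  from C2_on_with_comp[OF has_real_derivative_smooth_step has_real_derivative_smooth_step'
      continuous_on_smooth_step'' this]
  show ?thesis
  proof (rule that)
    show "0 \<le> smooth_step (q y) \<and> smooth_step (q y) \<le> 1" for y
      using smooth_step_bounds by simp
    have "q y \<le> 0" if "norm (y - x) \<le> \<rho>" for y
      using that R \<rho> by (simp add: q_def divide_le_0_iff abs_le_square_iff[symmetric])
    then show "smooth_step (q y) = 1 \<and> smooth_step' (q y) *\<^sub>R Dq y = 0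
        \<and> smooth_step' (q y) *\<^sub>R Hq + outer (Dq y) (smooth_step'' (q y) *\<^sub>R Dq y) = 0"
      if "norm (y - x) \<le> \<rho>" for y
      using that smooth_step_nonpos by simp
    have "1 \<le> q y" if "R \<le> norm (y - x)" for y
      using that R \<rho> by (simp add: q_def le_divide_eq power_mono)
    then show "smooth_step (q y) = 0 \<and> smooth_step' (q y) *\<^sub>R Dq y = 0
        \<and> smooth_step' (q y) *\<^sub>R Hq + outer (Dq y) (smooth_step'' (q y) *\<^sub>R Dq y) = 0"
      if "R \<le> norm (y - x)" for y
      using that smooth_step_ge1 by simp
  qed
qed

lemma halfspace_ball_cutoff:
  fixes x v :: "real^'n"
  assumes v: "norm v = 1" and w: "0 < w" and \<rho>: "0 \<le> \<rho>" "\<rho> < R"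
  obtains g Dg Hg where "C2_on_with g Dg Hg UNIV" "\<And>y. 0 \<le> g y \<and> g y \<le> 1"
    "\<And>y. inner v (y - x) \<le> a \<Longrightarrow> norm (y - x) \<le> \<rho> \<Longrightarrow> g y = 1"
    "\<And>y. g y \<noteq> 0 \<Longrightarrow> inner v (y - x) < a + w \<and> norm (y - x) < R"
    "\<And>y. a + w \<le> inner v (y - x) \<or> R \<le> norm (y - x) \<Longrightarrow> Dg y = 0 \<and> Hg y = 0"
    "\<And>y. norm (y - x) \<le> \<rho> \<Longrightarrow> norm (Dg y) \<le> 30 / w"
    "\<And>y. norm (y - x) \<le> \<rho> \<Longrightarrow>
      (\<Sum>i\<in>UNIV. \<Sum>j\<in>UNIV. \<bar>Hg y $ i $ j\<bar>) \<le> 60 * (real CARD('n))\<^sup>2 / w\<^sup>2"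
    "\<And>y d. norm (y - x) \<le> \<rho> \<Longrightarrow> 0 \<le> inner d v \<Longrightarrow> inner d (Dg y) \<le> 0"
proof -
  obtain g1 Dg1 Hg1 where C1: "C2_on_with g1 Dg1 Hg1 UNIV"
    and g1: "\<And>y. 0 \<le> g1 y \<and> g1 y \<le> 1" "\<And>y. inner v (y - x) \<le> a \<Longrightarrow> g1 y = 1"
      "\<And>y. a + w \<le> inner v (y - x) \<Longrightarrow> g1 y = 0 \<and> Dg1 y = 0 \<and> Hg1 y = 0"
      "\<And>y. norm (Dg1 y) \<le> 30 / w"
      "\<And>y. (\<Sum>i\<in>UNIV. \<Sum>j\<in>UNIV. \<bar>Hg1 y $ i $ j\<bar>) \<le> 60 * (real CARD('n))\<^sup>2 / w\<^sup>2"
      "\<And>y d. 0 \<le> inner d v \<Longrightarrow> inner d (Dg1 y) \<le> 0"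
    using halfspace_cutoff[OF v w, of x a] by blast
  obtain g2 Dg2 Hg2 where C2: "C2_on_with g2 Dg2 Hg2 UNIV"
    and g2: "\<And>y. 0 \<le> g2 y \<and> g2 y \<le> 1"
      "\<And>y. norm (y - x) \<le> \<rho> \<Longrightarrow> g2 y = 1 \<and> Dg2 y = 0 \<and> Hg2 y = 0"
      "\<And>y. R \<le> norm (y - x) \<Longrightarrow> g2 y = 0 \<and> Dg2 y = 0 \<and> Hg2 y = 0"
    using ball_cutoff[OF \<rho>, of x] by blast
  from C2_on_with_mult[OF C1 C2] show ?thesis
  proof (rule that)
    show "0 \<le> g1 y * g2 y \<and> g1 y * g2 y \<le> 1" for y
      using g1(1) g2(1) by (auto intro: mult_le_one)
    show "g1 y * g2 y = 1" if "inner v (y - x) \<le> a" "norm (y - x) \<le> \<rho>" for y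
      using that g1(2) g2(2) by simp
    show "inner v (y - x) < a + w \<and> norm (y - x) < R" if "g1 y * g2 y \<noteq> 0" for y
    proof -
      have "\<not> a + w \<le> inner v (y - x)" "\<not> R \<le> norm (y - x)"
        using that g1(3)[of y] g2(3)[of y] by auto
      then show ?thesis by simp
    qed
    show "g1 y *\<^sub>R Dg2 y + g2 y *\<^sub>R Dg1 y = 0
      \<and> g1 y *\<^sub>R Hg2 y + outer (Dg2 y) (Dg1 y) + (g2 y *\<^sub>R Hg1 y + outer (Dg1 y) (Dg2 y)) = 0"
      if "a + w \<le> inner v (y - x) \<or> R \<le> norm (y - x)" for y
      using that g1(3)[of y] g2(3)[of y] by auto
  qed (use g1(4-6) g2(2) in simp_all)
qed

lemma vertex_cutoff:
  fixes x v :: "real^'n" and K :: "(real^'n) set"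
  assumes v: "norm v = 1" and w: "0 < w" "r1 + w < r" and r: "0 < r" "r \<le> r2" "r2 < R"
    and sandwich: "\<And>y. y \<in> K \<Longrightarrow> norm (y - x) \<le> R \<Longrightarrow> inner v (y - x) < r \<Longrightarrow> norm (y - x) \<le> r2"
  obtains g Dg Hg where "C2_on_with g Dg Hg UNIV" "\<And>y. 0 \<le> g y \<and> g y \<le> 1"
    "closure {y. g y \<noteq> 0} \<subseteq> cball x R" "closure {y. g y \<noteq> 0} \<inter> K \<subseteq> cball x r2"
    "\<And>y. y \<in> cball x r1 \<Longrightarrow> g y = 1"
    "\<And>y. y \<in> K \<Longrightarrow> norm (Dg y) \<le> 30 / w"
    "\<And>y. y \<in> K \<Longrightarrow> (\<Sum>i\<in>UNIV. \<Sum>j\<in>UNIV. \<bar>Hg y $ i $ j\<bar>) \<le> 60 * (real CARD('n))\<^sup>2 / w\<^sup>2"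
    "\<And>y. y \<in> K \<Longrightarrow> Dg y \<noteq> 0 \<Longrightarrow> norm (y - x) < R"
    "\<And>y d. y \<in> K \<Longrightarrow> 0 \<le> inner d v \<Longrightarrow> inner d (Dg y) \<le> 0"
proof -
  define \<rho> where "\<rho> = (r2 + R) / 2"
  have \<rho>: "r2 < \<rho>" "\<rho> < R" "0 \<le> \<rho>" "r1 \<le> \<rho>" using r w by (auto simp: \<rho>_def)
  obtain g Dg Hg where C2: "C2_on_with g Dg Hg UNIV" and g01: "\<And>y. 0 \<le> g y \<and> g y \<le> 1"
    and g1: "\<And>y. inner v (y - x) \<le> r1 \<Longrightarrow> norm (y - x) \<le> \<rho> \<Longrightarrow> g y = 1"
    and supp: "\<And>y. g y \<noteq> 0 \<Longrightarrow> inner v (y - x) < r1 + w \<and> norm (y - x) < R"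
    and flat: "\<And>y. r1 + w \<le> inner v (y - x) \<or> R \<le> norm (y - x) \<Longrightarrow> Dg y = 0 \<and> Hg y = 0"
    and near: "\<And>y. norm (y - x) \<le> \<rho> \<Longrightarrow> norm (Dg y) \<le> 30 / w"
      "\<And>y. norm (y - x) \<le> \<rho> \<Longrightarrow>
        (\<Sum>i\<in>UNIV. \<Sum>j\<in>UNIV. \<bar>Hg y $ i $ j\<bar>) \<le> 60 * (real CARD('n))\<^sup>2 / w\<^sup>2"
      "\<And>y d. norm (y - x) \<le> \<rho> \<Longrightarrow> 0 \<le> inner d v \<Longrightarrow> inner d (Dg y) \<le> 0"
    by (rule halfspace_ball_cutoff[OF v w(1) \<rho>(3) \<rho>(2), where x = x and a = r1]) (rule that)
  \<comment> \<open>On K the sandwich condition keeps the ball factor flat wherever the halfspace factor varies.\<close>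
  have flat_or_near: "(Dg y = 0 \<and> Hg y = 0) \<or> norm (y - x) \<le> \<rho>" if "y \<in> K" for y
  proof (rule disjCI)
    assume "\<not> norm (y - x) \<le> \<rho>"
    then have "r1 + w \<le> inner v (y - x) \<or> R \<le> norm (y - x)"
      using sandwich[OF that] w(2) \<rho>(1) by fastforce
    then show "Dg y = 0 \<and> Hg y = 0" by (rule flat)
  qed
  have supp_cl: "closure {y. g y \<noteq> 0} \<subseteq> {y. inner v (y - x) \<le> r1 + w} \<inter> cball x R"
    by (rule closure_minimal)
       (auto dest!: supp simp: dist_norm norm_minus_commute
         intro!: closed_Collect_le continuous_intros)
  show ?thesis
  proof (rule that[OF C2 g01])
    show "closure {y. g y \<noteq> 0} \<subseteq> cball x R" using supp_cl by blast
    show "closure {y. g y \<noteq> 0} \<inter> K \<subseteq> cball x r2"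
      using supp_cl w(2) by (force simp: dist_norm norm_minus_commute intro: sandwich)
    show "g y = 1" if "y \<in> cball x r1" for y
    proof -
      have "norm (y - x) \<le> r1" using that by (simp add: dist_norm norm_minus_commute)
      moreover have "inner v (y - x) \<le> norm (y - x)"
        using norm_cauchy_schwarz[of v "y - x"] v by simp
      ultimately show ?thesis using g1 \<rho>(4) by simp
    qed
    show "norm (Dg y) \<le> 30 / w" if "y \<in> K" for y
      using flat_or_near[OF that] near(1) w(1) by auto
    show "(\<Sum>i\<in>UNIV. \<Sum>j\<in>UNIV. \<bar>Hg y $ i $ j\<bar>) \<le> 60 * (real CARD('n))\<^sup>2 / w\<^sup>2" if "y \<in> K" for y
      using flat_or_near[OF that] near(2) by auto
    show "norm (y - x) < R" if "y \<in> K" "Dg y \<noteq> 0" for y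
      using flat_or_near[OF that(1)] that(2) \<rho>(2) by auto
    show "inner d (Dg y) \<le> 0" if "y \<in> K" "0 \<le> inner d v" for y d
      using flat_or_near[OF that(1)] that(2) near(3) by auto
  qed
qed

lemma infdist_shifted_halfspace_pos:
  fixes x v y :: "'a::real_inner"
  assumes "norm v = 1" "inner v (y - x) < r"
  shows "0 < infdist y ((\<lambda>z. x + r *\<^sub>R v + z) ` {z. 0 \<le> inner z v})"
proof (rule infdist_pos_not_in_closed)
  show "closed ((\<lambda>z. x + r *\<^sub>R v + z) ` {z. 0 \<le> inner z v})"
    by (intro closed_translation closed_Collect_le continuous_intros)
  show "(\<lambda>z. x + r *\<^sub>R v + z) ` {z. 0 \<le> inner z v} \<noteq> {}" by (auto intro: exI[of _ 0])
  have "inner v (y - x) = r + inner z v" if "y = x + r *\<^sub>R v + z" for z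
    using that assms(1) by (simp add: inner_add_right inner_commute dot_square_norm)
  then show "y \<notin> (\<lambda>z. x + r *\<^sub>R v + z) ` {z. 0 \<le> inner z v}"
    using assms(2) by force
qed

lemma refl_cone_inner_nonneg:
  assumes "\<And>i. i \<in> active I \<phi> y \<Longrightarrow> 0 \<le> inner (\<gamma> i y) u" and "d \<in> refl_cone I \<phi> \<gamma> y"
  shows "0 \<le> inner d u"
  using assms unfolding refl_cone_def gen_cone_def
  by (auto simp: inner_sum_left intro!: sum_nonneg)

lemma assumption2'_vertexD:
  assumes A2: "assumption2' G I \<phi> D\<phi> \<gamma> \<sigma> V v rr \<alpha> c1 c2" and x: "x \<in> V"
  shows "norm (v x) = 1" "c1 x < 1" "1 < c2 x"
    and "\<And>y i. y \<in> closure G \<Longrightarrow> norm (y - x) \<le> rr x \<Longrightarrow> i \<in> active I \<phi> y \<Longrightarrow>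
           0 \<le> inner (\<gamma> i y) (v x)"
    and "\<And>r y. 0 < r \<Longrightarrow> r < rr x / c2 x \<Longrightarrow> y \<in> closure G \<Longrightarrow> norm (y - x) \<le> rr x \<Longrightarrow>
           inner (v x) (y - x) < r \<Longrightarrow> norm (y - x) \<le> c2 x * r"
proof -
  note facts = A2[unfolded assumption2'_def, THEN conjunct2, THEN conjunct2, THEN conjunct2,
      rule_format, OF x]
  show "norm (v x) = 1" "c1 x < 1" "1 < c2 x" using facts by auto
  show "0 \<le> inner (\<gamma> i y) (v x)"
    if "y \<in> closure G" "norm (y - x) \<le> rr x" "i \<in> active I \<phi> y" for y i
    using facts that by (auto simp: dist_norm norm_minus_commute)
  show "norm (y - x) \<le> c2 x * r"
    if "0 < r" "r < rr x / c2 x" "y \<in> closure G" "norm (y - x) \<le> rr x"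
      "inner (v x) (y - x) < r" for r y
  proof -
    have "0 < infdist y ((\<lambda>z. x + r *\<^sub>R v x + z) ` {z. 0 \<le> inner z (v x)})"
      using infdist_shifted_halfspace_pos \<open>norm (v x) = 1\<close> that(5) by blast
    then show ?thesis
      using facts that by (force simp: dist_norm norm_minus_commute)
  qed
qed

lemma cutoff_constant_bounds:
  fixes c r n :: real
  assumes c: "c < 1" and r: "0 < r"
  defines "A \<equiv> 60 / (1 - c) + 240 * n\<^sup>2 / (1 - c)\<^sup>2 + 1"
  shows "1 < A" "30 / ((1 - c) * r / 2) < A / r" "60 * n\<^sup>2 / ((1 - c) * r / 2)\<^sup>2 < A / r\<^sup>2"
proof -
  have "0 < 60 / (1 - c)" "0 \<le> 240 * n\<^sup>2 / (1 - c)\<^sup>2" using c by simp_all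
  then have A: "60 / (1 - c) < A" "240 * n\<^sup>2 / (1 - c)\<^sup>2 < A" "1 < A"
    unfolding A_def by linarith+
  show "1 < A" by (fact A(3))
  have "30 / ((1 - c) * r / 2) = 60 / (1 - c) / r" by simp
  also have "\<dots> < A / r" using A(1) r by (rule divide_strict_right_mono)
  finally show "30 / ((1 - c) * r / 2) < A / r" .
  have "60 * n\<^sup>2 / ((1 - c) * r / 2)\<^sup>2 = 240 * n\<^sup>2 / (1 - c)\<^sup>2 / r\<^sup>2"
    by (simp add: power2_eq_square)
  also have "\<dots> < A / r\<^sup>2" using A(2) by (rule divide_strict_right_mono) (use r in simp)
  finally show "60 * n\<^sup>2 / ((1 - c) * r / 2)\<^sup>2 < A / r\<^sup>2" .
qed

lemma assumption2'_cutoff: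
  fixes G :: "(real^'J) set" and x :: "real^'J"
  assumes A2: "assumption2' G I \<phi> D\<phi> \<gamma> \<sigma> V v rr \<alpha> c1 c2" and x: "x \<in> V"
    and r: "0 < r" "r < rr x / c2 x"
  defines "A \<equiv> 60 / (1 - c1 x) + 240 * (real CARD('J))\<^sup>2 / (1 - c1 x)\<^sup>2 + 1"
  shows "\<exists>g Dg Hg. C2c_closure_with G g Dg Hg \<and> (\<forall>y\<in>closure G. 0 \<le> g y) \<and>
              closure {y. g y \<noteq> 0} \<inter> closure G \<subseteq> cball x (c2 x * r) \<inter> closure G \<and>
              cball x (c2 x * r) \<inter> closure G \<subseteq> cball x (rr x) \<inter> closure G \<and>
              (\<forall>y\<in>cball x (c1 x * r) \<inter> closure G. g y = 1) \<and>
              (\<forall>y\<in>closure G. \<bar>g y\<bar> \<le> A) \<and>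
              (\<forall>y\<in>closure G. norm (Dg y) \<le> A / r) \<and>
              (\<exists>B < A / r\<^sup>2. \<forall>y\<in>closure G. (\<Sum>i\<in>UNIV. \<Sum>j\<in>UNIV. \<bar>Hg y $ i $ j\<bar>) \<le> B) \<and>
              (\<forall>y\<in>frontier G. \<forall>d\<in>refl_cone I \<phi> \<gamma> y. inner d (Dg y) \<le> 0)"
proof -
  note vertex = assumption2'_vertexD[OF A2 x]
  define w where "w = (1 - c1 x) * r / 2"
  define n where "n = real CARD('J)"
  have w: "0 < w" "c1 x * r + w < r"
    using vertex(2) r(1) mult_strict_right_mono[OF vertex(2) r(1)] by (auto simp: w_def field_simps)
  have c2r: "r \<le> c2 x * r" "c2 x * r < rr x"
    using r vertex(3) by (simp_all add: pos_less_divide_eq mult.commute)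
  obtain g Dg Hg where C2: "C2_on_with g Dg Hg UNIV" and g01: "\<And>y. 0 \<le> g y \<and> g y \<le> 1"
    and supp: "closure {y. g y \<noteq> 0} \<subseteq> cball x (rr x)"
      "closure {y. g y \<noteq> 0} \<inter> closure G \<subseteq> cball x (c2 x * r)"
    and g1: "\<And>y. y \<in> cball x (c1 x * r) \<Longrightarrow> g y = 1"
    and Dg: "\<And>y. y \<in> closure G \<Longrightarrow> norm (Dg y) \<le> 30 / w"
    and Hg: "\<And>y. y \<in> closure G \<Longrightarrow> (\<Sum>i\<in>UNIV. \<Sum>j\<in>UNIV. \<bar>Hg y $ i $ j\<bar>) \<le> 60 * n\<^sup>2 / w\<^sup>2"
    and near: "\<And>y. y \<in> closure G \<Longrightarrow> Dg y \<noteq> 0 \<Longrightarrow> norm (y - x) < rr x"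
    and refl: "\<And>y d. y \<in> closure G \<Longrightarrow> 0 \<le> inner d (v x) \<Longrightarrow> inner d (Dg y) \<le> 0"
    using vertex_cutoff[OF vertex(1) w r(1) c2r vertex(5)[OF r]] unfolding n_def by blast
  have A: "1 < A" "30 / w < A / r" "60 * n\<^sup>2 / w\<^sup>2 < A / r\<^sup>2"
    using cutoff_constant_bounds[OF vertex(2) r(1), of n] unfolding A_def n_def w_def .
  show ?thesis
  proof (intro exI[of _ g] exI[of _ Dg] exI[of _ Hg] conjI ballI)
    have "compact (closure {y. g y \<noteq> 0})"
      using bounded_subset[OF bounded_cball supp(1)] by (simp add: compact_eq_bounded_closed)
    with C2 show "C2c_closure_with G g Dg Hg"
      unfolding C2c_closure_with_def by (intro exI[of _ UNIV]) auto
    show "\<bar>g y\<bar> \<le> A" for y using g01[of y] A(1) by simp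
    show "norm (Dg y) \<le> A / r" if "y \<in> closure G" for y using Dg[OF that] A(2) by simp
    show "\<exists>B < A / r\<^sup>2. \<forall>y\<in>closure G. (\<Sum>i\<in>UNIV. \<Sum>j\<in>UNIV. \<bar>Hg y $ i $ j\<bar>) \<le> B"
      using Hg A(3) by blast
    show "inner d (Dg y) \<le> 0" if "y \<in> frontier G" "d \<in> refl_cone I \<phi> \<gamma> y" for y d
    proof (cases "Dg y = 0")
      case False
      have y: "y \<in> closure G" using that(1) by (simp add: frontier_def)
      with near False have "norm (y - x) \<le> rr x" by fastforce
      then have "0 \<le> inner d (v x)" by (intro refl_cone_inner_nonneg[OF vertex(4)[OF y] that(2)])
      then show ?thesis by (rule refl[OF y])
    qed simp
  qed (use g01 g1 supp c2r in \<open>auto simp: dist_norm\<close>)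
qed

theorem propositionA4:
  fixes G :: "(real^'J) set" and I :: "'i set" and \<phi> :: "'i \<Rightarrow> real^'J \<Rightarrow> real"
    and D\<phi> \<gamma> :: "'i \<Rightarrow> real^'J \<Rightarrow> real^'J" and \<sigma> :: "real^'J \<Rightarrow> real^'N^'J"
    and V :: "(real^'J) set" and v :: "real^'J \<Rightarrow> real^'J"
    and rr \<alpha> c1 c2 :: "real^'J \<Rightarrow> real"
  assumes "continuous_on UNIV \<sigma>"
    and "piecewise_C1_refl G I \<phi> D\<phi> \<gamma>"
    and "assumption2' G I \<phi> D\<phi> \<gamma> \<sigma> V v rr \<alpha> c1 c2"
  shows "\<forall>x\<in>V. \<exists>A::real. \<forall>r. 0 < r \<and> r < rr x / c2 x \<longrightarrow>
           (\<exists>g Dg Hg. C2c_closure_with G g Dg Hg \<and> (\<forall>y\<in>closure G. 0 \<le> g y) \<and>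
              closure {y. g y \<noteq> 0} \<inter> closure G \<subseteq> cball x (c2 x * r) \<inter> closure G \<and>
              cball x (c2 x * r) \<inter> closure G \<subseteq> cball x (rr x) \<inter> closure G \<and>
              (\<forall>y\<in>cball x (c1 x * r) \<inter> closure G. g y = 1) \<and>
              (\<forall>y\<in>closure G. \<bar>g y\<bar> \<le> A) \<and>
              (\<forall>y\<in>closure G. norm (Dg y) \<le> A / r) \<and>
              (\<exists>B < A / r\<^sup>2. \<forall>y\<in>closure G. (\<Sum>i\<in>UNIV. \<Sum>j\<in>UNIV. \<bar>Hg y $ i $ j\<bar>) \<le> B) \<and>
              (\<forall>y\<in>frontier G. \<forall>d\<in>refl_cone I \<phi> \<gamma> y. inner d (Dg y) \<le> 0))"
  using assumption2'_cutoff[OF assms(3)] by blast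

end
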